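(* Let $U$ be a Banach space with norm $\|\cdot\|$, $V$ a Hilbert space, $\psi:U\times V\to V$, and $(\bar u,\bar v)$ in the interior of the domain of $\psi$ with $\psi(\bar u,\bar v)=0$. Assume (a) there are neighborhoods ${\cal B}_U$ of $\bar u$ and ${\cal B}_V$ of $\bar v$ such that $\psi$ is continuous on ${\cal B}_U\times{\cal B}_V$; (b) $\psi(u,\cdot)$ is strongly monotone on ${\cal B}_V$ uniformly in $u\in{\cal B}_U$, i.e. there is $\tau>0$ with $\langle\psi(u,v_1)-\psi(u,v_2),v_1-v_2\rangle\ge\tau\|v_1-v_2\|^2$ for all $v_1,v_2\in{\cal B}_V$, $u\in{\cal B}_U$; (c) $\psi(\cdot,v)$ is Lipschitz continuous on $U$ uniformly in $v\in{\cal B}_V$. Then, with $S(u):=\{v\in V:\psi(u,v)=0\}$ for $u\in U$: (i) $S$ has a single-valued localization around $\bar u$ for $\bar v$; (ii) this localization is Lipschitz continuous around $\bar u$.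
   Context: A set-valued map $S:U\rightrightarrows V$ has a single-valued localization around $\bar u$ for $\bar v\in S(\bar u)$ if there are neighborhoods $W$ of $\bar u$ and $O$ of $\bar v$ such that $u\mapsto S(u)\cap O$ is single-valued on $W$ (in particular $W\subset\operatorname{dom}S$); it is Lipschitz continuous around $\bar u$ if this single-valued map is Lipschitz on $W$. *)

theory Defs
  imports "HOL-Analysis.Analysis"
begin

definition sv_localization_on :: "('a::topological_space \<Rightarrow> 'b::topological_space set)
    \<Rightarrow> 'a \<Rightarrow> 'b \<Rightarrow> 'a set \<Rightarrow> 'b set \<Rightarrow> bool" where
  "sv_localization_on S ub vb W Ov \<longleftrightarrow>
     vb \<in> S ub \<and> ub \<in> interior W \<and> vb \<in> interior Ov \<and> (\<forall>u\<in>W. \<exists>!v. v \<in> S u \<inter> Ov)"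

definition has_sv_localization :: "('a::topological_space \<Rightarrow> 'b::topological_space set)
    \<Rightarrow> 'a \<Rightarrow> 'b \<Rightarrow> bool" where
  "has_sv_localization S ub vb \<longleftrightarrow> (\<exists>W Ov. sv_localization_on S ub vb W Ov)"

definition has_lipschitz_sv_localization :: "('a::metric_space \<Rightarrow> 'b::metric_space set)
    \<Rightarrow> 'a \<Rightarrow> 'b \<Rightarrow> bool" where
  "has_lipschitz_sv_localization S ub vb \<longleftrightarrow>
     (\<exists>W Ov L. sv_localization_on S ub vb W Ov \<and>
        (lipschitz_on L W (\<lambda>u. THE v. v \<in> S u \<inter> Ov)))"

end

(* For fixed u near ub, a zero of psi u near vb is obtained by Minty's trick: strong monotonicity
   turns the Minty inequality into a Kirszbraun-type condition on a family of balls, and Kirszbraun's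
   intersection theorem in Hilbert space (a minimax argument for finitely many balls, completeness
   for arbitrary families) provides the Minty point. Strong monotonicity also makes this zero unique
   near vb and, combined with the uniform Lipschitz continuity of psi in u, gives the Lipschitz
   constant L / tau of the solution map. *)

theory Submission
  imports Defs
begin

section \<open>Kirszbraun's intersection theorem for finitely many balls\<close>

lemma sum_pairwise_sq_dist:
  fixes f :: "'i \<Rightarrow> 'v::real_inner"
  assumes "sum u Y = 1"
  shows "(\<Sum>y\<in>Y. \<Sum>z\<in>Y. u y * u z * (norm (f y - f z))\<^sup>2)
       = 2 * ((\<Sum>y\<in>Y. u y * (norm (f y))\<^sup>2) - (norm (\<Sum>y\<in>Y. u y *\<^sub>R f y))\<^sup>2)"
proof -
  have expand: "(norm (f y - f z))\<^sup>2 = (norm (f y))\<^sup>2 - 2 * inner (f y) (f z) + (norm (f z))\<^sup>2" for y z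
    by (simp add: power2_norm_eq_inner inner_diff_left inner_diff_right inner_commute)
  have cross: "(\<Sum>y\<in>Y. \<Sum>z\<in>Y. u y * u z * inner (f y) (f z)) = (norm (\<Sum>y\<in>Y. u y *\<^sub>R f y))\<^sup>2"
    by (simp add: power2_norm_eq_inner inner_sum_left inner_sum_right sum_distrib_left mult.assoc inner_commute)
      (subst sum.swap, simp add: mult.left_commute inner_commute)
  have left: "(\<Sum>y\<in>Y. \<Sum>z\<in>Y. u y * u z * (norm (f y))\<^sup>2) = (\<Sum>y\<in>Y. u y * (norm (f y))\<^sup>2)"
    using assms by (simp add: mult.commute mult.left_commute flip: sum_distrib_left sum_distrib_right)
  have right: "(\<Sum>y\<in>Y. \<Sum>z\<in>Y. u y * u z * (norm (f z))\<^sup>2) = (\<Sum>y\<in>Y. u y * (norm (f y))\<^sup>2)"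
    using left by (subst sum.swap) (simp add: mult.commute)
  have "(\<Sum>y\<in>Y. \<Sum>z\<in>Y. u y * u z * (norm (f y - f z))\<^sup>2)
      = (\<Sum>y\<in>Y. \<Sum>z\<in>Y. u y * u z * (norm (f y))\<^sup>2) + (\<Sum>y\<in>Y. \<Sum>z\<in>Y. u y * u z * (norm (f z))\<^sup>2)
        - 2 * (\<Sum>y\<in>Y. \<Sum>z\<in>Y. u y * u z * inner (f y) (f z))"
    by (simp add: expand algebra_simps sum.distrib sum_subtractf sum_distrib_left)
  then show ?thesis using left right cross by simp
qed

lemma barycenter_sq_dist_le:
  fixes b :: "'v::real_inner \<Rightarrow> 'v"
  assumes u_nonneg: "\<And>y. y \<in> Y \<Longrightarrow> 0 \<le> u y" and u_sum: "sum u Y = 1"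
    and expanding: "\<And>y z. y \<in> Y \<Longrightarrow> z \<in> Y \<Longrightarrow> norm (y - z) \<le> norm (b y - b z)"
  shows "(\<Sum>y\<in>Y. u y * (norm ((\<Sum>z\<in>Y. u z *\<^sub>R z) - y))\<^sup>2) \<le> (\<Sum>y\<in>Y. u y * (norm (b y))\<^sup>2)"
proof -
  define v where "v = (\<Sum>z\<in>Y. u z *\<^sub>R z)"
  have centered: "(\<Sum>y\<in>Y. u y *\<^sub>R (y - v)) = 0"
    using u_sum by (simp add: v_def scaleR_diff_right sum_subtractf flip: scaleR_sum_left)
  have "2 * (\<Sum>y\<in>Y. u y * (norm (v - y))\<^sup>2) = (\<Sum>y\<in>Y. \<Sum>z\<in>Y. u y * u z * (norm (y - z))\<^sup>2)"
    using sum_pairwise_sq_dist[OF u_sum, of "\<lambda>y. y - v"] centered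
    by (simp add: norm_minus_commute)
  also have "\<dots> \<le> (\<Sum>y\<in>Y. \<Sum>z\<in>Y. u y * u z * (norm (b y - b z))\<^sup>2)"
    using u_nonneg expanding by (intro sum_mono mult_left_mono power_mono) auto
  also have "\<dots> \<le> 2 * (\<Sum>y\<in>Y. u y * (norm (b y))\<^sup>2)"
    unfolding sum_pairwise_sq_dist[OF u_sum] by simp
  finally show ?thesis by (simp add: v_def)
qed

lemma continuous_on_Max:
  fixes f :: "'i \<Rightarrow> 'a::topological_space \<Rightarrow> real"
  assumes "finite J" "J \<noteq> {}" "\<And>i. i \<in> J \<Longrightarrow> continuous_on S (f i)"
  shows "continuous_on S (\<lambda>x. Max ((\<lambda>i. f i x) ` J))"
  using assms
proof (induction J rule: finite_ne_induct)
  case (insert i J)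
  then show ?case by (simp add: continuous_on_max)
qed simp

lemma eventually_closer_towards_closest_point:
  fixes v p y :: "'v::real_inner"
  assumes "convex H" "closed H" "p \<in> H" "y \<in> H" "p \<noteq> v"
    and closest: "\<And>q. q \<in> H \<Longrightarrow> dist v p \<le> dist v q"
  shows "\<forall>\<^sub>F t in at_right 0. norm (v + t *\<^sub>R (p - v) - y) < norm (v - y)"
proof -
  have "inner (v - p) (y - p) \<le> 0" using assms by (intro any_closest_point_dot) auto
  moreover have "inner (y - v) (p - v) = (norm (p - v))\<^sup>2 - inner (v - p) (y - p)"
    by (simp add: power2_norm_eq_inner inner_diff_left inner_diff_right inner_commute)
  moreover have "0 < (norm (p - v))\<^sup>2" using \<open>p \<noteq> v\<close> by simp
  ultimately have "0 < inner (y - v) (p - v)" by linarith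
  then obtain b where "b > 0"
    and closer: "\<And>t. 0 < t \<Longrightarrow> t \<le> b \<Longrightarrow> norm (t *\<^sub>R (p - v) - (y - v)) < norm (y - v)"
    using closer_points_lemma by blast
  have "norm (v + t *\<^sub>R (p - v) - y) < norm (v - y)" if "0 < t" "t < b" for t
    using closer[of t] that by (simp add: norm_minus_commute algebra_simps)
  then show ?thesis using \<open>b > 0\<close> by (auto simp: eventually_at_right_field)
qed

lemma excess_descent_towards_hull:
  fixes c :: "'i \<Rightarrow> 'v::real_inner" and r :: "'i \<Rightarrow> real"
  assumes "finite J" "A \<subseteq> J" "A \<noteq> {}" "v \<notin> convex hull (c ` A)"
    and active: "\<And>i. i \<in> A \<Longrightarrow> (norm (v - c i))\<^sup>2 - r i = m"
    and inactive: "\<And>i. i \<in> J - A \<Longrightarrow> (norm (v - c i))\<^sup>2 - r i < m"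
  obtains p where "p \<in> convex hull (c ` A)"
    and "\<forall>\<^sub>F t in at_right 0. \<forall>i\<in>J. (norm (v + t *\<^sub>R (p - v) - c i))\<^sup>2 - r i < m"
proof -
  define H where "H = convex hull (c ` A)"
  have "compact H" "convex H" "H \<noteq> {}"
    using \<open>finite J\<close> \<open>A \<subseteq> J\<close> \<open>A \<noteq> {}\<close> finite_subset[of A J]
    by (simp_all add: H_def finite_imp_compact_convex_hull)
  moreover have "continuous_on H (\<lambda>q. dist v q)" by (intro continuous_intros)
  ultimately obtain p where "p \<in> H" and p_closest: "\<And>q. q \<in> H \<Longrightarrow> dist v p \<le> dist v q"
    using continuous_attains_inf[of H "dist v"] by auto
  have "p \<noteq> v" using \<open>p \<in> H\<close> \<open>v \<notin> convex hull (c ` A)\<close> by (auto simp: H_def)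
  have "\<forall>\<^sub>F t in at_right 0. (norm (v + t *\<^sub>R (p - v) - c i))\<^sup>2 - r i < m" if "i \<in> J" for i
  proof (cases "i \<in> A")
    case True
    then have "c i \<in> H" by (simp add: H_def hull_inc)
    then have "\<forall>\<^sub>F t in at_right 0. norm (v + t *\<^sub>R (p - v) - c i) < norm (v - c i)"
      using \<open>compact H\<close> \<open>convex H\<close> \<open>p \<in> H\<close> \<open>p \<noteq> v\<close> p_closest
      by (intro eventually_closer_towards_closest_point) (auto intro: compact_imp_closed)
    then show ?thesis
    proof eventually_elim
      case (elim t)
      then have "(norm (v + t *\<^sub>R (p - v) - c i))\<^sup>2 < (norm (v - c i))\<^sup>2" by (simp add: power_strict_mono)
      then show ?case using active[OF True] by simp
    qed
  next
    case False
    have "((\<lambda>t. (norm (v + t *\<^sub>R (p - v) - c i))\<^sup>2 - r i) \<longlongrightarrow> (norm (v + 0 *\<^sub>R (p - v) - c i))\<^sup>2 - r i)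
        (at_right 0)"
      by (intro tendsto_intros)
    then show ?thesis using inactive[of i] False that by (auto intro: order_tendstoD)
  qed
  then have "\<forall>\<^sub>F t in at_right 0. \<forall>i\<in>J. (norm (v + t *\<^sub>R (p - v) - c i))\<^sup>2 - r i < m"
    using \<open>finite J\<close> by (intro eventually_ball_finite) auto
  with \<open>p \<in> H\<close> show ?thesis using that by (simp add: H_def)
qed

lemma min_max_point_in_hull_active:
  fixes c :: "'i \<Rightarrow> 'v::real_inner" and r :: "'i \<Rightarrow> real"
  assumes "finite J" "convex K" "v \<in> K" "convex hull (c ` J) \<subseteq> K"
    and below: "\<And>i. i \<in> J \<Longrightarrow> (norm (v - c i))\<^sup>2 - r i \<le> m"
    and minimal: "\<And>x. x \<in> K \<Longrightarrow> \<exists>i\<in>J. m \<le> (norm (x - c i))\<^sup>2 - r i"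
  shows "v \<in> convex hull (c ` {i\<in>J. (norm (v - c i))\<^sup>2 - r i = m})"
proof (rule ccontr)
  define A where "A = {i\<in>J. (norm (v - c i))\<^sup>2 - r i = m}"
  assume v_notin: "v \<notin> convex hull (c ` A)"
  have "A \<subseteq> J" "A \<noteq> {}" using minimal[OF \<open>v \<in> K\<close>] below by (force simp: A_def)+
  have active: "(norm (v - c i))\<^sup>2 - r i = m" if "i \<in> A" for i using that by (simp add: A_def)
  have inactive: "(norm (v - c i))\<^sup>2 - r i < m" if "i \<in> J - A" for i
    using below that by (force simp: A_def)
  obtain p where "p \<in> convex hull (c ` A)"
    and descent: "\<forall>\<^sub>F t in at_right 0. \<forall>i\<in>J. (norm (v + t *\<^sub>R (p - v) - c i))\<^sup>2 - r i < m"
    using excess_descent_towards_hull[OF \<open>finite J\<close> \<open>A \<subseteq> J\<close> \<open>A \<noteq> {}\<close> v_notin active inactive] .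
  have "convex hull (c ` A) \<subseteq> convex hull (c ` J)" using \<open>A \<subseteq> J\<close> by (intro hull_mono image_mono)
  then have "p \<in> K" using \<open>p \<in> convex hull (c ` A)\<close> assms(4) by blast
  have "\<forall>\<^sub>F t in at_right 0. 0 < t \<and> t < (1::real)"
    by (auto simp: eventually_at_right_field intro: exI[of _ 1])
  with descent obtain t where t: "\<forall>i\<in>J. (norm (v + t *\<^sub>R (p - v) - c i))\<^sup>2 - r i < m" "0 < t" "t < 1"
    using eventually_happens[OF eventually_conj] trivial_limit_at_right_real by blast
  have "v + t *\<^sub>R (p - v) = (1 - t) *\<^sub>R v + t *\<^sub>R p" by (simp add: algebra_simps)
  then have "v + t *\<^sub>R (p - v) \<in> K" using \<open>convex K\<close> \<open>v \<in> K\<close> \<open>p \<in> K\<close> t by (simp add: convexD)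
  then show False using minimal t(1) by force
qed

lemma hull_point_excess_nonpos:
  fixes c a :: "'i \<Rightarrow> 'v::real_inner"
  assumes "finite A"
    and expanding: "\<And>i j. i \<in> A \<Longrightarrow> j \<in> A \<Longrightarrow> norm (c i - c j) \<le> norm (a i - a j)"
    and "v \<in> convex hull (c ` A)" and excess: "\<And>i. i \<in> A \<Longrightarrow> (norm (v - c i))\<^sup>2 - (norm (a i))\<^sup>2 = m"
  shows "m \<le> 0"
proof -
  define Y where "Y = c ` A"
  have "finite Y" using \<open>finite A\<close> by (simp add: Y_def)
  then obtain u where u_nonneg: "\<And>y. y \<in> Y \<Longrightarrow> 0 \<le> u y" and u_sum: "sum u Y = 1"
    and u_v: "(\<Sum>y\<in>Y. u y *\<^sub>R y) = v"
    using \<open>v \<in> convex hull (c ` A)\<close> convex_hull_finite[of Y] by (auto simp flip: Y_def)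
  define b where "b = a \<circ> inv_into A c"
  have index: "inv_into A c y \<in> A" "c (inv_into A c y) = y" if "y \<in> Y" for y
    using that by (simp_all add: Y_def inv_into_into f_inv_into_f)
  have "norm (y - z) \<le> norm (b y - b z)" if "y \<in> Y" "z \<in> Y" for y z
    using expanding[of "inv_into A c y" "inv_into A c z"] index[OF that(1)] index[OF that(2)]
    by (simp add: b_def)
  then have "(\<Sum>y\<in>Y. u y * (norm (v - y))\<^sup>2) \<le> (\<Sum>y\<in>Y. u y * (norm (b y))\<^sup>2)"
    using barycenter_sq_dist_le[OF u_nonneg u_sum, of b] by (simp add: u_v)
  moreover have "(norm (v - y))\<^sup>2 = (norm (b y))\<^sup>2 + m" if "y \<in> Y" for y
    using excess[OF index(1)[OF that]] index(2)[OF that] by (simp add: b_def)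
  ultimately have "m * sum u Y \<le> 0"
    by (simp add: sum.distrib sum_distrib_left algebra_simps)
  then show "m \<le> 0" by (simp add: u_sum)
qed

lemma Kirszbraun_cballs_finite:
  fixes c a :: "'i \<Rightarrow> 'v::real_inner"
  assumes "finite J"
    and expanding: "\<And>i j. i \<in> J \<Longrightarrow> j \<in> J \<Longrightarrow> norm (c i - c j) \<le> norm (a i - a j)"
  shows "(\<Inter>i\<in>J. cball (c i) (norm (a i))) \<noteq> {}"
proof (cases "J = {}")
  case False
  define h where "h i x = (norm (x - c i))\<^sup>2 - (norm (a i))\<^sup>2" for i x
  define g where "g x = Max ((\<lambda>i. h i x) ` J)" for x
  define K where "K = convex hull (c ` J)"
  have "compact K" "K \<noteq> {}" using \<open>finite J\<close> False by (simp_all add: K_def finite_imp_compact_convex_hull)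
  moreover have "continuous_on K g"
    unfolding g_def h_def using \<open>finite J\<close> False by (intro continuous_on_Max continuous_intros)
  ultimately obtain v where "v \<in> K" and v_min: "\<And>x. x \<in> K \<Longrightarrow> g v \<le> g x"
    using continuous_attains_inf[of K g] by auto
  define m where "m = g v"
  have below: "h i v \<le> m" if "i \<in> J" for i
    unfolding m_def g_def using \<open>finite J\<close> that by (intro Max_ge) auto
  have minimal: "\<exists>i\<in>J. m \<le> h i x" if "x \<in> K" for x
  proof -
    have "g x \<in> (\<lambda>i. h i x) ` J" unfolding g_def using \<open>finite J\<close> False by (intro Max_in) auto
    then show ?thesis using v_min[OF that] by (auto simp: m_def)
  qed
  define A where "A = {i\<in>J. h i v = m}"
  have "v \<in> convex hull (c ` A)"
    unfolding A_def h_def using \<open>finite J\<close> \<open>v \<in> K\<close> below minimal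
    by (intro min_max_point_in_hull_active[where K = K]) (auto simp: K_def h_def)
  have "m \<le> 0"
    using \<open>finite J\<close> expanding \<open>v \<in> convex hull (c ` A)\<close>
    by (intro hull_point_excess_nonpos[of A c a v]) (auto simp: A_def h_def)
  have "v \<in> cball (c i) (norm (a i))" if "i \<in> J" for i
  proof -
    have "(norm (v - c i))\<^sup>2 \<le> (norm (a i))\<^sup>2"
      using below[OF that] \<open>m \<le> 0\<close> unfolding h_def by linarith
    then have "norm (v - c i) \<le> norm (a i)" by (rule power2_le_imp_le) simp
    then show ?thesis by (simp add: dist_norm norm_minus_commute)
  qed
  then show ?thesis by blast
qed simp

section \<open>Intersections of closed convex sets in Hilbert spaces\<close>

lemma convex_norm_diff_sq_le:
  fixes x y :: "'v::real_inner"
  assumes "convex A" "x \<in> A" "y \<in> A" and lower: "\<And>z. z \<in> A \<Longrightarrow> d \<le> norm z" and "0 \<le> d"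
  shows "(norm (x - y))\<^sup>2 \<le> 2 * (norm x)\<^sup>2 + 2 * (norm y)\<^sup>2 - 4 * d\<^sup>2"
proof -
  have "(1/2) *\<^sub>R x + (1/2) *\<^sub>R y \<in> A" using assms(1-3) by (intro convexD) auto
  then have "d\<^sup>2 \<le> (norm ((1/2) *\<^sub>R (x + y)))\<^sup>2"
    using lower \<open>0 \<le> d\<close> by (simp add: power_mono scaleR_add_right)
  moreover have "(norm (x - y))\<^sup>2 = 2 * (norm x)\<^sup>2 + 2 * (norm y)\<^sup>2 - 4 * (norm ((1/2) *\<^sub>R (x + y)))\<^sup>2"
    by (simp add: power2_norm_eq_inner inner_diff_left inner_diff_right inner_add_left inner_add_right
        inner_commute algebra_simps)
  ultimately show ?thesis by linarith
qed

lemma convex_near_min_norm_dist_le: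
  fixes x y :: "'v::real_inner"
  assumes "convex A" "x \<in> A" "y \<in> A" "D - e < infdist 0 A" "infdist 0 A \<le> D"
    and "norm x < D + e" "norm y < D + e"
  shows "norm (x - y) \<le> sqrt (16 * e * (D + e))"
proof -
  define d where "d = infdist 0 A"
  have "0 \<le> d" by (simp add: d_def infdist_nonneg)
  have "(norm (x - y))\<^sup>2 \<le> 2 * (norm x)\<^sup>2 + 2 * (norm y)\<^sup>2 - 4 * d\<^sup>2"
    using assms(1-3) infdist_le[of _ A 0] \<open>0 \<le> d\<close> by (intro convex_norm_diff_sq_le) (auto simp: d_def)
  also have "\<dots> \<le> 4 * ((D + e)\<^sup>2 - d\<^sup>2)"
    using assms(6,7) power_mono[of "norm x" "D + e" 2] power_mono[of "norm y" "D + e" 2] by simp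
  also have "(D + e)\<^sup>2 - d\<^sup>2 = (D + e - d) * (D + e + d)" by (simp add: power2_eq_square algebra_simps)
  also have "\<dots> \<le> (2 * e) * (2 * (D + e))"
    using assms(4,5) \<open>0 \<le> d\<close> by (intro mult_mono) (auto simp: d_def)
  finally show ?thesis by (intro real_le_rsqrt) (simp add: algebra_simps)
qed

lemma metric_CauchyI_common_point:
  fixes x :: "nat \<Rightarrow> 'a::metric_space"
  assumes "\<beta> \<longlonglongrightarrow> 0"
    and common: "\<And>N m n. N \<le> m \<Longrightarrow> N \<le> n \<Longrightarrow> \<exists>z. dist (x m) z \<le> \<beta> N \<and> dist (x n) z \<le> \<beta> N"
  shows "Cauchy x"
proof (rule metric_CauchyI)
  fix r :: real assume "0 < r"
  then obtain N where N: "\<beta> N < r / 2"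
    using order_tendstoD(2)[OF assms(1), of "r / 2"] by (auto simp: eventually_sequentially)
  have "dist (x m) (x n) < r" if mn: "N \<le> m" "N \<le> n" for m n
  proof -
    obtain z where "dist (x m) z \<le> \<beta> N" "dist (x n) z \<le> \<beta> N" using common[OF mn] by blast
    then show ?thesis using dist_triangle2[of "x m" "x n" z] N by linarith
  qed
  then show "\<exists>M. \<forall>m\<ge>M. \<forall>n\<ge>M. dist (x m) (x n) < r" by blast
qed

lemma closed_convex_family_Inter_nonempty:
  fixes \<F> :: "'v::{real_inner, complete_space} set set"
  assumes closed: "\<And>A. A \<in> \<F> \<Longrightarrow> closed A" and convex: "\<And>A. A \<in> \<F> \<Longrightarrow> convex A"
    and nonempty: "\<And>A. A \<in> \<F> \<Longrightarrow> A \<noteq> {}" and Int: "\<And>A B. A \<in> \<F> \<Longrightarrow> B \<in> \<F> \<Longrightarrow> A \<inter> B \<in> \<F>"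
    and "A\<^sub>0 \<in> \<F>" "bounded A\<^sub>0"
  shows "\<Inter>\<F> \<noteq> {}"
proof -
  txt \<open>A substitute for weak compactness: let \<open>D\<close> be the supremum over \<open>\<F>\<close> of the distances to
    the origin. Points of norm below \<open>D + e\<close> in members at distance above \<open>D - e\<close> are close to
    each other, so they form a Cauchy sequence whose limit lies in every member.\<close>
  define D where "D = (SUP A\<in>\<F>. infdist 0 A)"
  obtain M where M: "\<And>x. x \<in> A\<^sub>0 \<Longrightarrow> norm x \<le> M" using \<open>bounded A\<^sub>0\<close> by (auto simp: bounded_iff)
  have "infdist 0 A \<le> M" if A: "A \<in> \<F>" for A
  proof -
    obtain x where "x \<in> A \<inter> A\<^sub>0" using nonempty[OF Int[OF A \<open>A\<^sub>0 \<in> \<F>\<close>]] by blast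
    then show ?thesis using infdist_le[of x A 0] M[of x] by auto
  qed
  then have le_D: "infdist 0 A \<le> D" if "A \<in> \<F>" for A
    unfolding D_def using that by (intro cSup_upper bdd_aboveI2) auto
  have D_approx: "\<exists>A\<in>\<F>. D - e < infdist 0 A" if "0 < e" for e
    using less_cSupD[of "(\<lambda>A. infdist 0 A) ` \<F>" "D - e"] \<open>A\<^sub>0 \<in> \<F>\<close> that by (auto simp: D_def)
  have near: "\<exists>x\<in>A. norm x < D + e" if "A \<in> \<F>" "0 < e" for A e
    using cInf_lessD[of "(\<lambda>x. dist 0 x) ` A" "infdist 0 A + e"] le_D[OF that(1)] nonempty[OF that(1)] that(2)
    by (force simp: infdist_notempty)
  define e where "e n = inverse (real (Suc n))" for n
  have e_pos: "0 < e n" for n by (simp add: e_def)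
  have "\<forall>n. \<exists>A\<in>\<F>. D - e n < infdist 0 A" using D_approx e_pos by blast
  then obtain A where A: "\<And>n. A n \<in> \<F>" "\<And>n. D - e n < infdist 0 (A n)" by metis
  have "\<forall>n. \<exists>x\<in>A n. norm x < D + e n" using near A(1) e_pos by blast
  then obtain x where x: "\<And>n. x n \<in> A n" "\<And>n. norm (x n) < D + e n" by metis
  define \<gamma> where "\<gamma> n = sqrt (16 * e n * (D + e n))" for n
  have close: "dist (x n) y \<le> \<gamma> N" if "N \<le> n" "y \<in> A n" "norm y < D + e N" for N n y
  proof -
    have "e n \<le> e N" using that(1) by (simp add: e_def le_imp_inverse_le)
    then show ?thesis
      unfolding \<gamma>_def dist_norm using A[of n] x[of n] that(2,3) le_D
      by (intro convex_near_min_norm_dist_le[OF convex]) auto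
  qed
  have "e \<longlonglongrightarrow> 0" unfolding e_def by (rule LIMSEQ_inverse_real_of_nat)
  then have "\<gamma> \<longlonglongrightarrow> sqrt (16 * 0 * (D + 0))" unfolding \<gamma>_def by (intro tendsto_intros)
  then have \<gamma>_lim: "\<gamma> \<longlonglongrightarrow> 0" by simp
  have "Cauchy x"
  proof (rule metric_CauchyI_common_point[OF \<gamma>_lim])
    fix N m n :: nat assume "N \<le> m" "N \<le> n"
    obtain z where "z \<in> A m \<inter> A n" "norm z < D + e N" using near[OF Int[OF A(1) A(1)] e_pos] by blast
    then show "\<exists>z. dist (x m) z \<le> \<gamma> N \<and> dist (x n) z \<le> \<gamma> N"
      using close \<open>N \<le> m\<close> \<open>N \<le> n\<close> by blast
  qed
  then obtain l where "x \<longlonglongrightarrow> l" using Cauchy_convergent_iff convergent_def by blast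
  have "l \<in> B" if B: "B \<in> \<F>" for B
  proof -
    have "\<forall>n. \<exists>y\<in>B \<inter> A n. norm y < D + e n" using near[OF Int[OF B A(1)] e_pos] by blast
    then obtain y where y: "\<And>n. y n \<in> B \<inter> A n" "\<And>n. norm (y n) < D + e n" by metis
    have "\<forall>n. norm (x n - y n) \<le> \<gamma> n" using close[OF order_refl] y by (simp add: dist_norm)
    then have "(\<lambda>n. x n - y n) \<longlonglongrightarrow> 0" by (rule Lim_null_comparison[OF always_eventually \<gamma>_lim])
    from tendsto_diff[OF \<open>x \<longlonglongrightarrow> l\<close> this] have "y \<longlonglongrightarrow> l" by simp
    then show "l \<in> B" using closed_sequentially[OF closed[OF B], of y l] y(1) by blast
  qed
  then have "l \<in> \<Inter>\<F>" by (rule InterI)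
  then show ?thesis by auto
qed

lemma Kirszbraun_cballs:
  fixes c a :: "'i \<Rightarrow> 'v::{real_inner, complete_space}"
  assumes expanding: "\<And>i j. i \<in> I \<Longrightarrow> j \<in> I \<Longrightarrow> norm (c i - c j) \<le> norm (a i - a j)"
  shows "(\<Inter>i\<in>I. cball (c i) (norm (a i))) \<noteq> {}"
proof (cases "I = {}")
  case False
  then obtain i\<^sub>0 where "i\<^sub>0 \<in> I" by blast
  define B where "B J = (\<Inter>i\<in>J. cball (c i) (norm (a i)))" for J
  define \<F> where "\<F> = B ` {J. finite J \<and> J \<subseteq> I}"
  have "\<Inter>\<F> \<noteq> {}"
  proof (rule closed_convex_family_Inter_nonempty)
    show "closed A" "convex A" if "A \<in> \<F>" for A
      using that by (auto simp: \<F>_def B_def intro!: closed_INT convex_INT)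
    show "A \<noteq> {}" if A: "A \<in> \<F>" for A
    proof -
      obtain J where "A = B J" "finite J" "J \<subseteq> I" using A by (auto simp: \<F>_def)
      moreover have "B J \<noteq> {}"
        unfolding B_def using \<open>finite J\<close> by (rule Kirszbraun_cballs_finite) (use \<open>J \<subseteq> I\<close> expanding in blast)
      ultimately show ?thesis by simp
    qed
    show "A \<inter> A' \<in> \<F>" if A: "A \<in> \<F>" "A' \<in> \<F>" for A A'
    proof -
      obtain J J' where "A = B J" "A' = B J'" "finite J" "J \<subseteq> I" "finite J'" "J' \<subseteq> I"
        using A by (auto simp: \<F>_def)
      moreover have "B J \<inter> B J' = B (J \<union> J')" by (auto simp: B_def)
      ultimately show ?thesis by (auto simp: \<F>_def)
    qed
    show "B {i\<^sub>0} \<in> \<F>" using \<open>i\<^sub>0 \<in> I\<close> by (auto simp: \<F>_def)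
    show "bounded (B {i\<^sub>0})" by (simp add: B_def)
  qed
  moreover have "B {i} \<in> \<F>" if "i \<in> I" for i using that by (auto simp: \<F>_def)
  then have "\<Inter>\<F> \<subseteq> (\<Inter>i\<in>I. cball (c i) (norm (a i)))" by (force simp: B_def)
  ultimately show ?thesis by blast
qed simp

section \<open>Zeros of strongly monotone maps\<close>

lemma norm_add_le_norm_iff:
  fixes x y :: "'v::real_inner"
  shows "norm (x + y) \<le> norm y \<longleftrightarrow> (norm x)\<^sup>2 + 2 * inner x y \<le> 0"
  by (simp add: norm_le power2_norm_eq_inner inner_add_left inner_add_right inner_commute add.commute)

lemma norm_le_of_sq_le_inner:
  fixes x y :: "'v::real_inner"
  assumes "0 < \<tau>" and "\<tau> * (norm x)\<^sup>2 \<le> inner y x"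
  shows "\<tau> * norm x \<le> norm y"
proof (cases "x = 0")
  case False
  have "\<tau> * norm x * norm x \<le> norm y * norm x"
    using assms(2) norm_cauchy_schwarz[of y x] by (simp add: power2_eq_square mult.assoc)
  then show ?thesis using False by simp
qed (use assms in simp)

lemma Minty_zero:
  fixes F :: "'v::real_inner \<Rightarrow> 'v"
  assumes "open C" "v \<in> C" "isCont F v"
    and Minty: "\<And>w. w \<in> C \<Longrightarrow> 0 \<le> inner (F w) (w - v)"
  shows "F v = 0"
proof -
  define d where "d = F v"
  have "((\<lambda>s::real. v - s *\<^sub>R d) \<longlongrightarrow> v - 0 *\<^sub>R d) (at_right 0)" by (intro tendsto_intros)
  then have path: "((\<lambda>s::real. v - s *\<^sub>R d) \<longlongrightarrow> v) (at_right 0)" by simp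
  have "\<forall>\<^sub>F s in at_right 0. v - s *\<^sub>R d \<in> C \<and> 0 < s"
    using topological_tendstoD[OF path \<open>open C\<close> \<open>v \<in> C\<close>] eventually_at_right_less by (rule eventually_conj)
  then have "\<forall>\<^sub>F s in at_right 0. inner (F (v - s *\<^sub>R d)) d \<le> 0"
  proof eventually_elim
    case (elim s)
    then have "0 \<le> - s * inner (F (v - s *\<^sub>R d)) d" using Minty[of "v - s *\<^sub>R d"] by simp
    then show ?case using elim by (auto simp: mult_le_0_iff)
  qed
  moreover have "((\<lambda>s. inner (F (v - s *\<^sub>R d)) d) \<longlongrightarrow> inner (F v) d) (at_right 0)"
    using isCont_tendsto_compose[OF \<open>isCont F v\<close> path] by (intro tendsto_intros)
  ultimately have "inner d d \<le> 0" unfolding d_def by (intro tendsto_upperbound) auto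
  then show ?thesis by (metis d_def inner_gt_zero_iff not_le)
qed

text \<open>The balls \<open>cball (w - a w) (norm (a w))\<close> with \<open>a = F / (2 * \<tau>)\<close> satisfy Kirszbraun's condition
  exactly because \<open>F\<close> is strongly monotone, and a common point \<open>v\<close> of all of them is a Minty
  solution: \<open>\<tau> * (norm (w - v))\<^sup>2 \<le> inner (F w) (w - v)\<close>.\<close>

lemma strongly_monotone_zero_near:
  fixes F :: "'v::{real_inner, complete_space} \<Rightarrow> 'v"
  assumes "0 < r" "0 < \<tau>" "ball v\<^sub>0 r \<subseteq> V"
    and strongly_monotone: "\<And>v\<^sub>1 v\<^sub>2. v\<^sub>1 \<in> V \<Longrightarrow> v\<^sub>2 \<in> V \<Longrightarrow>
      \<tau> * (norm (v\<^sub>1 - v\<^sub>2))\<^sup>2 \<le> inner (F v\<^sub>1 - F v\<^sub>2) (v\<^sub>1 - v\<^sub>2)"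
    and "continuous_on V F" and "norm (F v\<^sub>0) < \<tau> * r"
  shows "\<exists>v\<in>ball v\<^sub>0 r. F v = 0"
proof -
  define a where "a w = (1 / (2 * \<tau>)) *\<^sub>R F w" for w
  have "(\<Inter>w\<in>ball v\<^sub>0 r. cball (w - a w) (norm (a w))) \<noteq> {}"
  proof (rule Kirszbraun_cballs)
    fix i j assume "i \<in> ball v\<^sub>0 r" "j \<in> ball v\<^sub>0 r"
    then have "\<tau> * (norm (i - j))\<^sup>2 \<le> \<tau> * (2 * inner (i - j) (a i - a j))"
      using strongly_monotone \<open>ball v\<^sub>0 r \<subseteq> V\<close> \<open>0 < \<tau>\<close>
      by (simp add: a_def inner_commute subset_eq flip: scaleR_diff_right)
    then have "(norm (i - j))\<^sup>2 \<le> 2 * inner (i - j) (a i - a j)" using \<open>0 < \<tau>\<close> by simp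
    then have "(norm (i - j))\<^sup>2 + 2 * inner (i - j) (- (a i - a j)) \<le> 0"
      unfolding inner_minus_right by linarith
    then show "norm ((i - a i) - (j - a j)) \<le> norm (a i - a j)"
      using norm_add_le_norm_iff[of "i - j" "- (a i - a j)"] by (simp add: algebra_simps norm_minus_commute)
  qed
  then obtain v where v: "\<forall>w\<in>ball v\<^sub>0 r. dist (w - a w) v \<le> norm (a w)"
    by (auto simp del: mem_ball)
  have Minty: "\<tau> * (norm (w - v))\<^sup>2 \<le> inner (F w) (w - v)" if "w \<in> ball v\<^sub>0 r" for w
  proof -
    have "(v - w) + a w = - ((w - a w) - v)" by simp
    then have "norm ((v - w) + a w) \<le> norm (a w)" using v that by (simp only: dist_norm norm_minus_cancel)
    then have "(norm (v - w))\<^sup>2 + 2 * inner (v - w) (a w) \<le> 0" by (simp only: norm_add_le_norm_iff)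
    then show ?thesis
      using \<open>0 < \<tau>\<close> by (simp add: a_def norm_minus_commute inner_commute inner_diff_right field_simps)
  qed
  have "\<tau> * norm (v\<^sub>0 - v) \<le> norm (F v\<^sub>0)"
    using Minty[of v\<^sub>0] \<open>0 < r\<close> \<open>0 < \<tau>\<close> by (intro norm_le_of_sq_le_inner) auto
  then have "\<tau> * norm (v\<^sub>0 - v) < \<tau> * r" using \<open>norm (F v\<^sub>0) < \<tau> * r\<close> by linarith
  then have "v \<in> ball v\<^sub>0 r" using \<open>0 < \<tau>\<close> by (simp add: dist_norm)
  moreover have "0 \<le> inner (F w) (w - v)" if "w \<in> ball v\<^sub>0 r" for w
    by (rule order_trans[OF _ Minty[OF that]]) (use \<open>0 < \<tau>\<close> in simp)
  moreover have "continuous_on (ball v\<^sub>0 r) F"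
    using \<open>continuous_on V F\<close> \<open>ball v\<^sub>0 r \<subseteq> V\<close> by (rule continuous_on_subset)
  ultimately have "F v = 0"
    by (intro Minty_zero[of "ball v\<^sub>0 r"]) (auto simp: continuous_on_eq_continuous_at)
  with \<open>v \<in> ball v\<^sub>0 r\<close> show ?thesis by blast
qed

lemma continuous_on_slice:
  assumes "continuous_on (A \<times> B) (\<lambda>(x, y). f x y)" "x \<in> A"
  shows "continuous_on B (f x)"
proof (rule continuous_on_compose2[OF assms(1), of _ "Pair x", simplified])
  show "continuous_on B (Pair x)" by (intro continuous_intros)
  show "Pair x ` B \<subseteq> A \<times> B" using \<open>x \<in> A\<close> by auto
qed

lemma lipschitz_sv_localizationI:
  fixes S :: "'a::metric_space \<Rightarrow> 'b::metric_space set"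
  assumes "vb \<in> S ub" "ub \<in> interior W" "vb \<in> interior Ov" "0 \<le> K"
    and exists: "\<And>u. u \<in> W \<Longrightarrow> \<exists>v\<in>Ov. v \<in> S u"
    and dist_le: "\<And>u\<^sub>1 u\<^sub>2 v\<^sub>1 v\<^sub>2. u\<^sub>1 \<in> W \<Longrightarrow> u\<^sub>2 \<in> W \<Longrightarrow> v\<^sub>1 \<in> S u\<^sub>1 \<inter> Ov \<Longrightarrow> v\<^sub>2 \<in> S u\<^sub>2 \<inter> Ov \<Longrightarrow>
      dist v\<^sub>1 v\<^sub>2 \<le> K * dist u\<^sub>1 u\<^sub>2"
  shows "sv_localization_on S ub vb W Ov \<and> lipschitz_on K W (\<lambda>u. THE v. v \<in> S u \<inter> Ov)"
proof -
  have unique: "\<exists>!v. v \<in> S u \<inter> Ov" if "u \<in> W" for u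
    using exists[OF that] dist_le[OF that that] by fastforce
  then have "(THE v. v \<in> S u \<inter> Ov) \<in> S u \<inter> Ov" if "u \<in> W" for u
    using theI' that by metis
  then show ?thesis
    using assms unique by (auto simp: sv_localization_on_def intro!: lipschitz_onI dist_le)
qed

theorem theorem8:
  fixes \<psi> :: "'u::banach \<Rightarrow> 'v::{real_inner, complete_space} \<Rightarrow> 'v"
    and ub :: 'u and vb :: 'v and BU :: "'u set" and BV :: "'v set" and \<tau> :: real
  assumes zero: "\<psi> ub vb = 0"
    and nbhU: "ub \<in> interior BU" and nbhV: "vb \<in> interior BV"
    and cont: "continuous_on (BU \<times> BV) (\<lambda>(u, v). \<psi> u v)"
    and tau_pos: "\<tau> > 0"
    and strong_mono: "\<forall>u\<in>BU. \<forall>v1\<in>BV. \<forall>v2\<in>BV.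
        inner (\<psi> u v1 - \<psi> u v2) (v1 - v2) \<ge> \<tau> * (norm (v1 - v2))\<^sup>2"
    and lip: "\<exists>L. \<forall>v\<in>BV. (lipschitz_on L UNIV (\<lambda>u. \<psi> u v))"
  shows "has_sv_localization (\<lambda>u. {v. \<psi> u v = 0}) ub vb
       \<and> has_lipschitz_sv_localization (\<lambda>u. {v. \<psi> u v = 0}) ub vb"
proof -
  define S where "S u = {v. \<psi> u v = 0}" for u
  obtain r where "0 < r" and r: "ball vb r \<subseteq> BV" using nbhV by (auto simp: mem_interior)
  obtain L where L: "\<And>v. v \<in> BV \<Longrightarrow> lipschitz_on L UNIV (\<lambda>u. \<psi> u v)" using lip by blast
  have "0 \<le> L" using L nbhV interior_subset lipschitz_on_nonneg by blast
  have \<psi>_lip: "norm (\<psi> u\<^sub>1 v - \<psi> u\<^sub>2 v) \<le> L * norm (u\<^sub>1 - u\<^sub>2)" if "v \<in> BV" for u\<^sub>1 u\<^sub>2 v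
    using lipschitz_on_normD[OF L[OF that]] by simp
  have mono: "\<tau> * (norm (v\<^sub>1 - v\<^sub>2))\<^sup>2 \<le> inner (\<psi> u v\<^sub>1 - \<psi> u v\<^sub>2) (v\<^sub>1 - v\<^sub>2)"
    if "u \<in> BU" "v\<^sub>1 \<in> BV" "v\<^sub>2 \<in> BV" for u v\<^sub>1 v\<^sub>2
    using strong_mono that by blast
  define W where "W = ball ub (\<tau> * r / (L + 1)) \<inter> interior BU"
  have "W \<subseteq> BU" using interior_subset by (auto simp: W_def)
  have "\<exists>v\<in>ball vb r. v \<in> S u" if "u \<in> W" for u
  proof -
    have "norm (\<psi> u vb) \<le> L * norm (u - ub)" using \<psi>_lip[of vb u ub] zero nbhV interior_subset by auto
    also have "\<dots> \<le> L * (\<tau> * r / (L + 1))"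
      using that \<open>0 \<le> L\<close> by (intro mult_left_mono) (auto simp: W_def dist_norm norm_minus_commute)
    also have "\<dots> < \<tau> * r" using \<open>0 \<le> L\<close> \<open>0 < r\<close> tau_pos by (simp add: field_simps)
    finally have "norm (\<psi> u vb) < \<tau> * r" .
    moreover have "u \<in> BU" using that \<open>W \<subseteq> BU\<close> by blast
    ultimately show ?thesis unfolding S_def
      using strongly_monotone_zero_near[OF \<open>0 < r\<close> tau_pos r mono continuous_on_slice[OF cont]] by blast
  qed
  moreover have "dist v\<^sub>1 v\<^sub>2 \<le> L / \<tau> * dist u\<^sub>1 u\<^sub>2"
    if "u\<^sub>1 \<in> W" "u\<^sub>2 \<in> W" "v\<^sub>1 \<in> S u\<^sub>1 \<inter> ball vb r" "v\<^sub>2 \<in> S u\<^sub>2 \<inter> ball vb r" for u\<^sub>1 u\<^sub>2 v\<^sub>1 v\<^sub>2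
  proof -
    have "v\<^sub>1 \<in> BV" "v\<^sub>2 \<in> BV" "u\<^sub>1 \<in> BU" using that r \<open>W \<subseteq> BU\<close> by auto
    then have "\<tau> * norm (v\<^sub>1 - v\<^sub>2) \<le> norm (\<psi> u\<^sub>1 v\<^sub>1 - \<psi> u\<^sub>1 v\<^sub>2)"
      by (intro norm_le_of_sq_le_inner[OF tau_pos] mono)
    also have "\<dots> = norm (\<psi> u\<^sub>2 v\<^sub>2 - \<psi> u\<^sub>1 v\<^sub>2)" using that by (simp add: S_def norm_minus_commute)
    also have "\<dots> \<le> L * norm (u\<^sub>1 - u\<^sub>2)" using \<psi>_lip \<open>v\<^sub>2 \<in> BV\<close> by (simp add: norm_minus_commute)
    finally show ?thesis using tau_pos by (simp add: dist_norm field_simps)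
  qed
  moreover have "ub \<in> interior W" using nbhU \<open>0 \<le> L\<close> \<open>0 < r\<close> tau_pos by (simp add: W_def interior_open)
  ultimately have "sv_localization_on S ub vb W (ball vb r)
      \<and> lipschitz_on (L / \<tau>) W (\<lambda>u. THE v. v \<in> S u \<inter> ball vb r)"
    using zero \<open>0 \<le> L\<close> \<open>0 < r\<close> tau_pos by (intro lipschitz_sv_localizationI) (auto simp: S_def)
  then show ?thesis
    unfolding has_sv_localization_def has_lipschitz_sv_localization_def S_def by blast
qed

end
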